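(* Let $a,b,c,d>0$ with $a+c\le b+d$, let $\mu\in(0,1]$ and $u>(c+d)/2$, and consider on $\mathcal{I}=[0,1]^2$ the controlled system $$\dot x=x(1-x)\big[xr(-c+d-a+b)+x(a-b)-r(d+b)+b+u\big]+\mu(1-2x),\qquad \dot r=r(1-r)(2x-1).$$ Let $(x_t^*,1)$ be the equilibrium on the side $\{r=1\}$ with $x_t^*\in(1/2,1)$. Then $(x_t^*,1)$ is almost globally stable.
   Context: For these parameters there is exactly one equilibrium $(x_t^*,1)$ on $\mathcal{B}_t=\{(x,1):x\in[0,1]\}$ with $x_t^*\in(1/2,1)$. An equilibrium is almost globally stable if it is asymptotically stable and every trajectory starting in $\mathcal{I}\setminus(\mathcal{B}_t\cup\mathcal{B}_b)$ converges to it, where $\mathcal{B}_b=\{(x,0):x\in[0,1]\}$. *)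

theory Defs
  imports "HOL-Analysis.Analysis"
begin

definition field :: "real \<Rightarrow> real \<Rightarrow> real \<Rightarrow> real \<Rightarrow> real \<Rightarrow> real \<Rightarrow> real \<times> real \<Rightarrow> real \<times> real" where
  "field a b c d \<mu> u p =
     (let x = fst p; r = snd p in
      (x * (1 - x) * (x * r * (- c + d - a + b) + x * (a - b) - r * (d + b) + b + u)
         + \<mu> * (1 - 2 * x),
       r * (1 - r) * (2 * x - 1)))"

definition Icube :: "(real \<times> real) set" where
  "Icube = {0..1} \<times> {0..1}"

definition Btop :: "(real \<times> real) set" where
  "Btop = {p. fst p \<in> {0..1} \<and> snd p = 1}"

definition Bbot :: "(real \<times> real) set" where
  "Bbot = {p. fst p \<in> {0..1} \<and> snd p = 0}"

definition trajectory :: "(real \<times> real \<Rightarrow> real \<times> real) \<Rightarrow> real \<times> real \<Rightarrow> (real \<Rightarrow> real \<times> real) \<Rightarrow> bool" where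
  "trajectory f p0 \<phi> \<longleftrightarrow> \<phi> 0 = p0 \<and>
     (\<forall>t\<ge>0. (\<phi> has_vector_derivative f (\<phi> t)) (at t within {0..}))"

definition lyap_stable :: "(real \<times> real \<Rightarrow> real \<times> real) \<Rightarrow> (real \<times> real) set \<Rightarrow> real \<times> real \<Rightarrow> bool" where
  "lyap_stable f S e \<longleftrightarrow>
     (\<forall>\<epsilon>>0. \<exists>\<delta>>0. \<forall>p0 \<phi>. p0 \<in> S \<and> dist p0 e < \<delta> \<and> trajectory f p0 \<phi> \<longrightarrow>
        (\<forall>t\<ge>0. dist (\<phi> t) e < \<epsilon>))"

definition asympt_stable :: "(real \<times> real \<Rightarrow> real \<times> real) \<Rightarrow> (real \<times> real) set \<Rightarrow> real \<times> real \<Rightarrow> bool" where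
  "asympt_stable f S e \<longleftrightarrow> f e = 0 \<and> lyap_stable f S e \<and>
     (\<exists>\<delta>>0. \<forall>p0 \<phi>. p0 \<in> S \<and> dist p0 e < \<delta> \<and> trajectory f p0 \<phi> \<longrightarrow>
        (\<phi> \<longlongrightarrow> e) at_top)"

definition almost_globally_stable :: "(real \<times> real \<Rightarrow> real \<times> real) \<Rightarrow> real \<times> real \<Rightarrow> bool" where
  "almost_globally_stable f e \<longleftrightarrow> asympt_stable f Icube e \<and>
     (\<forall>p0 \<phi>. p0 \<in> Icube - (Btop \<union> Bbot) \<and> trajectory f p0 \<phi> \<longrightarrow> (\<phi> \<longlongrightarrow> e) at_top)"

end

theory Submission
  imports Defs
begin

text \<open>
  Write \<open>F x r\<close> for the \<open>x\<close>-component of the field. On the top side \<open>F x 1\<close> changes sign exactly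
  once on \<open>[1/2, 1]\<close>, at \<open>xt\<close>, and \<open>F x r \<ge> F x 1\<close> for \<open>r \<le> 1\<close>. A trajectory starting off the
  two invariant sides must reach \<open>x > 1/2\<close>: otherwise the Lyapunov function \<open>x + \<beta> ln (1 - r)\<close>
  would grow at a uniform rate while staying below \<open>1/2\<close>. From then on \<open>x\<close> stays above \<open>1/2\<close>,
  eventually even a fixed distance above it, so \<open>1 - r\<close> decays exponentially, and \<open>x\<close> follows the
  asymptotically autonomous equation \<open>x' = F x 1 + o(1)\<close>, whose only attracting zero in
  \<open>[1/2, 1]\<close> is \<open>xt\<close>. Lyapunov stability holds because small boxes
  \<open>(xt - \<alpha>, xt + \<alpha>) \<times> [1 - \<eta>, 1]\<close> are forward invariant.
\<close>

section \<open>Scalar differential inequalities on the half-line\<close>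

lemma increment_ge_of_deriv_ge:
  fixes f f' :: "real \<Rightarrow> real"
  assumes der: "\<And>t. t \<ge> 0 \<Longrightarrow> (f has_real_derivative f' t) (at t within {0..})"
    and st: "0 \<le> s" "s \<le> t" and bound: "\<And>\<tau>. s \<le> \<tau> \<Longrightarrow> \<tau> \<le> t \<Longrightarrow> C \<le> f' \<tau>"
  shows "f s + C * (t - s) \<le> f t"
proof -
  have "((\<lambda>\<tau>. f \<tau> - C * \<tau>) has_derivative (\<lambda>h. (f' \<tau> - C) * h)) (at \<tau> within {s..t})"
    if "s \<le> \<tau>" "\<tau> \<le> t" for \<tau>
  proof -
    have "(f has_real_derivative f' \<tau>) (at \<tau> within {s..t})"
      using der[of \<tau>] that st by (auto intro: has_field_derivative_subset)
    then have "((\<lambda>\<tau>. f \<tau> - C * \<tau>) has_real_derivative f' \<tau> - C) (at \<tau> within {s..t})"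
      by (auto intro!: derivative_eq_intros)
    then show ?thesis by (simp only: has_field_derivative_def)
  qed
  from mvt_very_simple[OF st(2) this] obtain \<tau>
    where "\<tau> \<in> {s..t}" and "f t - C * t - (f s - C * s) = (f' \<tau> - C) * (t - s)"
    by auto
  moreover have "0 \<le> (f' \<tau> - C) * (t - s)" if "\<tau> \<in> {s..t}"
    using bound[of \<tau>] that st by simp
  ultimately show ?thesis by (simp add: algebra_simps)
qed

lemma continuous_on_of_deriv:
  fixes f f' :: "real \<Rightarrow> real"
  assumes "\<And>t. t \<ge> 0 \<Longrightarrow> (f has_real_derivative f' t) (at t within {0..})"
  shows "continuous_on {0..} f"
  using assms by (auto simp: continuous_on_eq_continuous_within intro: DERIV_continuous)

lemma linear_ode_exp:
  fixes f k :: "real \<Rightarrow> real"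
  assumes der: "\<And>t. t \<ge> 0 \<Longrightarrow> (f has_real_derivative f t * k t) (at t within {0..})"
    and cont: "continuous_on {0..} k" and "T \<ge> 0"
  shows "f T = f 0 * exp (integral {0..T} k)"
proof -
  define G where "G \<tau> = integral {0..\<tau>} k" for \<tau>
  have "((\<lambda>\<tau>. f \<tau> * exp (- G \<tau>)) has_real_derivative 0) (at t within {0..T})" if "t \<in> {0..T}" for t
  proof -
    have "(G has_real_derivative k t) (at t within {0..T})"
      unfolding G_def using that continuous_on_subset[OF cont, of "{0..T}"]
      by (intro integral_has_real_derivative) auto
    moreover have "(f has_real_derivative f t * k t) (at t within {0..T})"
      using der[of t] that by (auto intro: has_field_derivative_subset)
    ultimately show ?thesis by (auto intro!: derivative_eq_intros)
  qed
  moreover have "convex {0..T}" by simp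
  ultimately obtain C where "\<forall>t\<in>{0..T}. f t * exp (- G t) = C"
    using has_field_derivative_zero_constant by blast
  then have "f T * exp (- G T) = f 0 * exp (- G 0)" using \<open>T \<ge> 0\<close> by auto
  then show ?thesis by (simp add: G_def exp_minus field_simps)
qed

lemma barrier_ge:
  fixes f f' :: "real \<Rightarrow> real"
  assumes der: "\<And>t. t \<ge> 0 \<Longrightarrow> (f has_real_derivative f' t) (at t within {0..})"
    and start: "0 \<le> t0" "c \<le> f t0"
    and inward: "\<And>s. t0 \<le> s \<Longrightarrow> f s = c \<Longrightarrow> f' s > 0"
    and "t0 \<le> t"
  shows "c \<le> f t"
proof (rule ccontr)
  assume "\<not> c \<le> f t"
  then have ft: "f t < c" by simp
  have cont: "continuous_on {t0..t} f"
    using continuous_on_subset[OF continuous_on_of_deriv[OF der], of "{t0..t}"] start by auto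
  define S where "S = {t0..t} \<inter> f -` {c..}"
  have "closed S" unfolding S_def
    by (rule continuous_closed_preimage[OF cont]) auto
  moreover have "t0 \<in> S" "bdd_above S" using start \<open>t0 \<le> t\<close> by (auto simp: S_def)
  ultimately have sS: "Sup S \<in> S" and upper: "\<And>\<tau>. \<tau> \<in> S \<Longrightarrow> \<tau> \<le> Sup S"
    by (auto intro: closed_contains_Sup cSup_upper)
  \<comment> \<open>at the last time \<open>s\<close> with \<open>f \<ge> c\<close> we get \<open>f s = c\<close>, but then \<open>f > c\<close> just after \<open>s\<close>\<close>
  define s where "s = Sup S"
  have s: "t0 \<le> s" "s < t" "c \<le> f s"
    using sS ft by (auto simp: S_def s_def less_le)
  have "continuous_on {s..t} f" using continuous_on_subset[OF cont, of "{s..t}"] s by auto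
  then obtain z where z: "s \<le> z" "z \<le> t" "f z = c"
    using IVT2'[of f t c s] ft s by auto
  then have "z = s" using upper[of z] s by (auto simp: S_def s_def)
  with z have "f s = c" by simp
  then obtain h where h: "h > 0" "\<And>e. e > 0 \<Longrightarrow> s + e \<in> {0..} \<Longrightarrow> e < h \<Longrightarrow> f s < f (s + e)"
    using has_real_derivative_pos_inc_right[OF der[of s] inward[of s]] s start by auto
  define e where "e = min (h / 2) (t - s)"
  have "e > 0" "e < h" "s + e \<le> t" using h s by (auto simp: e_def)
  then have "s + e \<in> S" using h(2)[of e] s start \<open>f s = c\<close> by (auto simp: S_def)
  then have "s + e \<le> s" using upper unfolding s_def by blast
  then show False using \<open>e > 0\<close> by simp
qed

lemma barrier_gt:
  fixes f f' :: "real \<Rightarrow> real"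
  assumes der: "\<And>t. t \<ge> 0 \<Longrightarrow> (f has_real_derivative f' t) (at t within {0..})"
    and start: "0 \<le> t0" "c < f t0"
    and inward: "\<And>s. t0 \<le> s \<Longrightarrow> f s = c \<Longrightarrow> f' s > 0"
    and "t0 \<le> t"
  shows "c < f t"
proof (rule ccontr)
  have ge: "c \<le> f \<tau>" if "t0 \<le> \<tau>" for \<tau>
    using barrier_ge[OF der] start inward that by (meson less_imp_le)
  assume "\<not> c < f t"
  with ge[OF \<open>t0 \<le> t\<close>] have ft: "f t = c" by simp
  then have "t0 < t" using start \<open>t0 \<le> t\<close> by (auto simp: less_le)
  obtain h where h: "h > 0" "\<And>e. e > 0 \<Longrightarrow> t - e \<in> {0..} \<Longrightarrow> e < h \<Longrightarrow> f (t - e) < f t"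
    using has_real_derivative_pos_inc_left[OF der[of t] inward[of t]] start \<open>t0 \<le> t\<close> ft by auto
  define e where "e = min (h / 2) (t - t0)"
  have "e > 0" "e < h" "t0 \<le> t - e" using h \<open>t0 < t\<close> by (auto simp: e_def)
  then have "f (t - e) < c" using h(2)[of e] start ft by auto
  with ge[OF \<open>t0 \<le> t - e\<close>] show False by simp
qed

lemma eventually_gt_of_deriv_ge:
  fixes f f' :: "real \<Rightarrow> real"
  assumes der: "\<And>t. t \<ge> 0 \<Longrightarrow> (f has_real_derivative f' t) (at t within {0..})"
    and "m > 0"
    and bounded: "eventually (\<lambda>t. f t \<le> B) at_top"
    and push: "eventually (\<lambda>t. f t \<le> c \<longrightarrow> m \<le> f' t) at_top"
  shows "eventually (\<lambda>t. c < f t) at_top"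
proof -
  obtain t1 where B1: "\<And>t. t \<ge> t1 \<Longrightarrow> f t \<le> B \<and> (f t \<le> c \<longrightarrow> m \<le> f' t)"
    using eventually_conj[OF bounded push] unfolding eventually_at_top_linorder by blast
  define t0 where "t0 = max t1 0"
  have t0: "t0 \<ge> 0" and B: "\<And>t. t \<ge> t0 \<Longrightarrow> f t \<le> B"
    and m: "\<And>t. t \<ge> t0 \<Longrightarrow> f t \<le> c \<Longrightarrow> m \<le> f' t"
    using B1 by (auto simp: t0_def)
  have "\<exists>t1\<ge>t0. c < f t1"
  proof (rule ccontr)
    assume "\<not> ?thesis"
    then have below: "\<And>t. t \<ge> t0 \<Longrightarrow> f t \<le> c" by force
    define t where "t = t0 + (\<bar>B - f t0\<bar> + 1) / m"
    have "t0 \<le> t" using \<open>m > 0\<close> by (simp add: t_def)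
    then have "f t0 + m * (t - t0) \<le> f t"
      using increment_ge_of_deriv_ge[OF der t0] m below by auto
    moreover have "m * (t - t0) = \<bar>B - f t0\<bar> + 1" using \<open>m > 0\<close> by (simp add: t_def)
    ultimately show False using B[OF \<open>t0 \<le> t\<close>] by linarith
  qed
  then obtain t1 where "t1 \<ge> t0" "c < f t1" by blast
  have "c < f t" if "t \<ge> t1" for t
  proof (rule barrier_gt[OF der _ _ _ that])
    show "f' s > 0" if "t1 \<le> s" "f s = c" for s
      using m[of s] that \<open>t1 \<ge> t0\<close> \<open>m > 0\<close> by simp
  qed (use \<open>t1 \<ge> t0\<close> \<open>c < f t1\<close> t0 in auto)
  then show ?thesis unfolding eventually_at_top_linorder by blast
qed

lemma exp_weighted_le_of_deriv_le_neg_mult: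
  fixes f f' :: "real \<Rightarrow> real"
  assumes der: "\<And>t. t \<ge> 0 \<Longrightarrow> (f has_real_derivative f' t) (at t within {0..})"
    and "0 \<le> T" "T \<le> t" and decay: "\<And>t. t \<ge> T \<Longrightarrow> f' t \<le> - \<kappa> * f t"
  shows "f t * exp (\<kappa> * t) \<le> f T * exp (\<kappa> * T)"
proof -
  have "(\<lambda>t. - (f t * exp (\<kappa> * t))) T + 0 * (t - T) \<le> (\<lambda>t. - (f t * exp (\<kappa> * t))) t"
  proof (rule increment_ge_of_deriv_ge)
    show "((\<lambda>t. - (f t * exp (\<kappa> * t))) has_real_derivative - ((f' t + \<kappa> * f t) * exp (\<kappa> * t)))
        (at t within {0..})" if "t \<ge> 0" for t
      using der[OF that] by (auto intro!: derivative_eq_intros simp: algebra_simps)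
    show "0 \<le> - ((f' \<tau> + \<kappa> * f \<tau>) * exp (\<kappa> * \<tau>))" if "T \<le> \<tau>" for \<tau>
      using decay[OF that] by (simp add: mult_nonpos_nonneg)
  qed (use assms in auto)
  then show ?thesis by simp
qed

lemma tendsto_zero_of_deriv_le_neg_mult:
  fixes f f' :: "real \<Rightarrow> real"
  assumes der: "\<And>t. t \<ge> 0 \<Longrightarrow> (f has_real_derivative f' t) (at t within {0..})"
    and "\<kappa> > 0" "T \<ge> 0"
    and nonneg: "\<And>t. t \<ge> T \<Longrightarrow> 0 \<le> f t"
    and decay: "\<And>t. t \<ge> T \<Longrightarrow> f' t \<le> - \<kappa> * f t"
  shows "(f \<longlongrightarrow> 0) at_top"
proof (rule tendsto_sandwich)
  have "f t \<le> f T * exp (\<kappa> * T) * exp (- \<kappa> * t)" if "t \<ge> T" for t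
  proof -
    have "f t = f t * exp (\<kappa> * t) * exp (- \<kappa> * t)"
      by (simp add: mult.assoc flip: exp_add)
    also have "\<dots> \<le> f T * exp (\<kappa> * T) * exp (- \<kappa> * t)"
      using exp_weighted_le_of_deriv_le_neg_mult[OF der \<open>T \<ge> 0\<close> that decay]
      by (rule mult_right_mono) auto
    finally show ?thesis .
  qed
  then show "eventually (\<lambda>t. f t \<le> f T * exp (\<kappa> * T) * exp (- \<kappa> * t)) at_top"
    unfolding eventually_at_top_linorder by blast
  show "eventually (\<lambda>t. 0 \<le> f t) at_top"
    unfolding eventually_at_top_linorder using nonneg by blast
  show "((\<lambda>t. f T * exp (\<kappa> * T) * exp (- \<kappa> * t)) \<longlongrightarrow> 0) at_top"
  proof (rule tendsto_mult_right_zero)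
    have "filterlim (\<lambda>t. - \<kappa> * t) at_bot at_top"
      by (rule filterlim_tendsto_neg_mult_at_bot[OF tendsto_const _ filterlim_ident])
        (use \<open>\<kappa> > 0\<close> in simp)
    then show "((\<lambda>t. exp (- \<kappa> * t)) \<longlongrightarrow> 0) at_top"
      by (rule filterlim_compose[OF exp_at_bot])
  qed
qed (rule tendsto_const)

lemma continuous_on_interval_pos_bound:
  fixes g :: "real \<Rightarrow> real"
  assumes "continuous_on {lo..hi} g" and "\<And>y. lo \<le> y \<Longrightarrow> y \<le> hi \<Longrightarrow> g y > 0"
  shows "\<exists>M>0. \<forall>y\<in>{lo..hi}. M \<le> g y"
proof (cases "lo \<le> hi")
  case True
  then obtain y0 where "y0 \<in> {lo..hi}" "\<forall>y\<in>{lo..hi}. g y0 \<le> g y"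
    using continuous_attains_inf[OF compact_Icc _ assms(1)] by auto
  with assms(2) show ?thesis by auto
qed (intro exI[of _ 1]; simp)

lemma eventually_gt_of_asymptotic_drift:
  fixes x x' g :: "real \<Rightarrow> real"
  assumes der: "\<And>t. t \<ge> 0 \<Longrightarrow> (x has_real_derivative x' t) (at t within {0..})"
    and cont: "continuous_on {lo..w} g" and pos: "\<And>y. lo \<le> y \<Longrightarrow> y \<le> w \<Longrightarrow> g y > 0"
    and range: "eventually (\<lambda>t. lo \<le> x t \<and> x t \<le> hi) at_top"
    and close: "((\<lambda>t. x' t - g (x t)) \<longlongrightarrow> 0) at_top"
  shows "eventually (\<lambda>t. w < x t) at_top"
proof -
  obtain M where "M > 0" and M: "\<And>y. lo \<le> y \<Longrightarrow> y \<le> w \<Longrightarrow> M \<le> g y"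
    using continuous_on_interval_pos_bound[OF cont] pos by auto
  have near: "eventually (\<lambda>t. \<bar>x' t - g (x t)\<bar> < M / 2) at_top"
    using tendstoD[OF close, of "M / 2"] \<open>M > 0\<close> by simp
  show ?thesis
  proof (rule eventually_gt_of_deriv_ge[OF der, of "M / 2" hi])
    show "eventually (\<lambda>t. x t \<le> w \<longrightarrow> M / 2 \<le> x' t) at_top"
      using eventually_conj[OF range near]
    proof eventually_elim
      case (elim t)
      show ?case
      proof
        assume "x t \<le> w"
        then have "M \<le> g (x t)" using M elim by simp
        then show "M / 2 \<le> x' t" using elim unfolding abs_less_iff by linarith
      qed
    qed
    show "eventually (\<lambda>t. x t \<le> hi) at_top"
      using range by (rule eventually_mono) simp
  qed (use \<open>M > 0\<close> in simp_all)
qed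

lemma tendsto_of_asymptotically_autonomous:
  fixes x x' g :: "real \<Rightarrow> real"
  assumes der: "\<And>t. t \<ge> 0 \<Longrightarrow> (x has_real_derivative x' t) (at t within {0..})"
    and cont: "continuous_on {lo..hi} g" and "lo < z" "z < hi"
    and pos: "\<And>y. lo \<le> y \<Longrightarrow> y < z \<Longrightarrow> g y > 0"
    and neg: "\<And>y. z < y \<Longrightarrow> y \<le> hi \<Longrightarrow> g y < 0"
    and range: "eventually (\<lambda>t. lo \<le> x t \<and> x t \<le> hi) at_top"
    and close: "((\<lambda>t. x' t - g (x t)) \<longlongrightarrow> 0) at_top"
  shows "(x \<longlongrightarrow> z) at_top"
proof (rule tendstoI)
  fix e :: real assume "e > 0"
  define e1 where "e1 = min e (min (z - lo) (hi - z))"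
  have e1: "0 < e1" "e1 \<le> e" "lo \<le> z - e1" "z + e1 \<le> hi"
    using \<open>e > 0\<close> \<open>lo < z\<close> \<open>z < hi\<close> by (auto simp: e1_def)
  have "eventually (\<lambda>t. z - e1 < x t) at_top"
    using continuous_on_subset[OF cont] e1 pos
    by (intro eventually_gt_of_asymptotic_drift[OF der _ _ range close]) auto
  \<comment> \<open>the upper bound is the lower bound for the reflected equation \<open>(- x)' = - g (- (- x)) + o(1)\<close>\<close>
  moreover have "eventually (\<lambda>t. - (z + e1) < - x t) at_top"
  proof (rule eventually_gt_of_asymptotic_drift[where g = "\<lambda>y. - g (- y)" and hi = "- lo"])
    show "((\<lambda>t. - x t) has_real_derivative - x' t) (at t within {0..})" if "t \<ge> 0" for t
      using der[OF that] by (rule DERIV_minus)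
    show "continuous_on {- hi..- (z + e1)} (\<lambda>y. - g (- y))"
      using e1 by (intro continuous_intros continuous_on_compose2[OF cont]) auto
    show "eventually (\<lambda>t. - hi \<le> - x t \<and> - x t \<le> - lo) at_top"
      using range by (rule eventually_mono) simp
    show "((\<lambda>t. - x' t - (- g (- (- x t)))) \<longlongrightarrow> 0) at_top"
      using tendsto_minus[OF close] by simp
  qed (use neg e1 in auto)
  ultimately show "eventually (\<lambda>t. dist (x t) z < e) at_top"
    by eventually_elim (use e1 in \<open>auto simp: dist_real_def\<close>)
qed

section \<open>The vector field\<close>

lemma cubic_sign_persists:
  fixes k e \<mu> y1 y2 :: real
  defines "p \<equiv> \<lambda>y. (1/4 - y\<^sup>2) * (k + e * y) - 2 * \<mu> * y"
  assumes "k > 0" "\<mu> > 0" and y: "0 \<le> y1" "y1 < y2" "y2 \<le> 1/2" and "p y1 \<le> 0"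
  shows "p y2 < 0"
proof (cases "e \<ge> 0")
  case True
  \<comment> \<open>for \<open>e \<ge> 0\<close> the quotient \<open>p y / y\<close> is strictly decreasing\<close>
  have "y1 \<noteq> 0" using \<open>p y1 \<le> 0\<close> \<open>k > 0\<close> by (auto simp: p_def)
  with y have "y1 > 0" by simp
  have "y1 * p y2 - y2 * p y1 = - ((y2 - y1) * (k / 4 + k * y1 * y2 + e * y1 * y2 * (y1 + y2)))"
    by (simp add: p_def power2_eq_square field_simps)
  moreover have "0 < (y2 - y1) * (k / 4 + k * y1 * y2 + e * y1 * y2 * (y1 + y2))"
    using \<open>k > 0\<close> True \<open>y1 > 0\<close> y by (intro mult_pos_pos add_pos_nonneg) auto
  moreover have "y2 * p y1 \<le> 0"
    using \<open>p y1 \<le> 0\<close> y by (simp add: mult_nonneg_nonpos)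
  ultimately have "y1 * p y2 < 0" by linarith
  with \<open>y1 > 0\<close> show ?thesis by (simp add: mult_less_0_iff)
next
  case False
  \<comment> \<open>for \<open>e < 0\<close> both factors of the product decrease\<close>
  have "y2\<^sup>2 \<le> (1/2)\<^sup>2" "y1\<^sup>2 < y2\<^sup>2" using y by (auto intro: power_mono power_strict_mono)
  then have sq: "0 \<le> 1/4 - y2\<^sup>2" "1/4 - y2\<^sup>2 < 1/4 - y1\<^sup>2" by (auto simp: power2_eq_square)
  have lin: "k + e * y2 < k + e * y1" using False y by (simp add: mult_strict_left_mono_neg)
  have "2 * \<mu> * y1 < 2 * \<mu> * y2" using \<open>\<mu> > 0\<close> y by simp
  moreover have "(1/4 - y2\<^sup>2) * (k + e * y2) \<le> max 0 ((1/4 - y1\<^sup>2) * (k + e * y1))"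
  proof (cases "k + e * y2 \<le> 0")
    case True
    then show ?thesis using sq by (simp add: mult_nonneg_nonpos le_max_iff_disj)
  next
    case False
    then show ?thesis using sq lin by (simp add: le_max_iff_disj mult_mono)
  qed
  moreover have "0 < 2 * \<mu> * y2" using \<open>\<mu> > 0\<close> y by simp
  ultimately show ?thesis using \<open>p y1 \<le> 0\<close> unfolding p_def by linarith
qed

locale feedback_game =
  fixes a b c d \<mu> u :: real
  assumes a_pos: "a > 0" and b_pos: "b > 0" and c_pos: "c > 0" and d_pos: "d > 0"
    and mu_pos: "\<mu> > 0" and u_gt: "u > (c + d) / 2"
begin

definition F :: "real \<Rightarrow> real \<Rightarrow> real" where
  "F x r = x * (1 - x) * (x * r * (- c + d - a + b) + x * (a - b) - r * (d + b) + b + u)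
     + \<mu> * (1 - 2 * x)"

lemma field_eq: "field a b c d \<mu> u p = (F (fst p) (snd p), snd p * (1 - snd p) * (2 * fst p - 1))"
  by (simp add: field_def F_def Let_def)

definition k0 :: real where "k0 = u - (c + d) / 2"

lemma k0_pos: "k0 > 0"
  using u_gt by (simp add: k0_def)

lemma F_0: "F 0 r = \<mu>" and F_1: "F 1 r = - \<mu>"
  by (simp_all add: F_def)

lemma F_affine: "F x r = (1 - r) * F x 0 + r * F x 1"
  by (simp add: F_def algebra_simps)

lemma F_eq_top_plus:
  "F x r = F x 1 + (1 - r) * (x * (1 - x) * (x * (a + c) + (1 - x) * (b + d)))"
  by (simp add: F_def algebra_simps)

lemma F_top_le:
  assumes "0 \<le> x" "x \<le> 1" "r \<le> 1"
  shows "F x 1 \<le> F x r"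
  using assms a_pos b_pos c_pos d_pos by (subst F_eq_top_plus) (auto intro!: mult_nonneg_nonneg)

lemma F_le_top:
  assumes "0 \<le> x" "x \<le> 1" "0 \<le> r" "r \<le> 1"
  shows "F x r \<le> F x 1 + (1 - r) * (a + b + c + d)"
proof -
  have "x * (a + c) + (1 - x) * (b + d) \<le> (a + c) + (b + d)"
    using assms a_pos b_pos c_pos d_pos by (intro add_mono mult_left_le_one_le) auto
  moreover have "0 \<le> x * (1 - x)" "x * (1 - x) \<le> 1"
    using assms by (auto intro: mult_le_one)
  moreover have "0 \<le> x * (a + c) + (1 - x) * (b + d)"
    using assms a_pos b_pos c_pos d_pos by auto
  ultimately have "x * (1 - x) * (x * (a + c) + (1 - x) * (b + d)) \<le> a + b + c + d"
    using mult_mono[of "x * (1 - x)" 1] by fastforce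
  then show ?thesis
    using assms by (subst F_eq_top_plus) (simp add: mult_left_mono)
qed

lemma F_top_centered: "F (1/2 + y) 1 = (1/4 - y\<^sup>2) * (k0 + (d - c) * y) - 2 * \<mu> * y"
  by (simp add: F_def k0_def power2_eq_square) algebra

lemma F_top_neg_after_nonpos:
  assumes "1/2 \<le> x1" "x1 < x2" "x2 \<le> 1" "F x1 1 \<le> 0"
  shows "F x2 1 < 0"
  using cubic_sign_persists[OF k0_pos mu_pos, of "x1 - 1/2" "x2 - 1/2" "d - c"]
    F_top_centered[of "x1 - 1/2"] F_top_centered[of "x2 - 1/2"] assms
  by simp

lemma F_bottom_ge:
  assumes "0 \<le> x" "x \<le> 1/2"
  shows "min \<mu> (u / 4) \<le> F x 0"
proof -
  have "min \<mu> (u / 4) = (2 * x) * min \<mu> (u / 4) + (1 - 2 * x) * min \<mu> (u / 4)"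
    by (simp add: algebra_simps)
  also have "\<dots> \<le> (2 * x) * (u / 4) + (1 - 2 * x) * \<mu>"
    using assms by (intro add_mono mult_left_mono) auto
  finally have "min \<mu> (u / 4) \<le> (2 * x) * (u / 4) + (1 - 2 * x) * \<mu>" .
  moreover have "F x 0 = (2 * x) * (u / 4) + (1 - 2 * x) * \<mu>
      + x * (1 - x) * (x * a + (1 - x) * b) + x * u * (1/2 - x)"
    by (simp add: F_def algebra_simps)
  moreover have "0 \<le> x * (1 - x) * (x * a + (1 - x) * b)" "0 \<le> x * u * (1/2 - x)"
    using assms a_pos b_pos c_pos d_pos u_gt by auto
  ultimately show ?thesis by linarith
qed

lemma F_top_ge_left:
  assumes "0 \<le> x" "x \<le> 1/2"
  shows "k0 / 4 \<le> F x 1 + (d / 8 + k0 / 2) * (1 - 2 * x)"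
proof -
  define y where "y = 1/2 - x"
  have y: "0 \<le> y" "y \<le> 1/2" "1 - 2 * x = 2 * y" using assms by (auto simp: y_def)
  then have "y\<^sup>2 \<le> (1/2)\<^sup>2" by (intro power_mono) auto
  have "F x 1 = F (1/2 + (- y)) 1" by (simp add: y_def)
  also have "\<dots> = (1/4 - y\<^sup>2) * (k0 - (d - c) * y) + 2 * \<mu> * y"
    by (simp only: F_top_centered) simp
  finally have "F x 1 + (d / 8 + k0 / 2) * (1 - 2 * x)
      = k0 / 4 + y * (1 - y) * k0 + c * y * (1/4 - y\<^sup>2) + d * y ^ 3 + 2 * \<mu> * y"
    unfolding y(3) by (simp add: power2_eq_square power3_eq_cube algebra_simps)
  moreover have "0 \<le> y * (1 - y) * k0" "0 \<le> c * y * (1/4 - y\<^sup>2)" "0 \<le> d * y ^ 3" "0 \<le> 2 * \<mu> * y"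
    using y \<open>y\<^sup>2 \<le> (1/2)\<^sup>2\<close> k0_pos c_pos d_pos mu_pos by (auto simp: power2_eq_square)
  ultimately show ?thesis by linarith
qed

lemma lyapunov_rate_left_half:
  obtains \<beta> m where "\<beta> > 0" "m > 0"
    and "\<And>x r. 0 \<le> x \<Longrightarrow> x \<le> 1/2 \<Longrightarrow> 0 \<le> r \<Longrightarrow> r \<le> 1 \<Longrightarrow> m \<le> F x r + \<beta> * r * (1 - 2 * x)"
proof
  define m where "m = min (min \<mu> (u / 4)) (k0 / 4)"
  show "d / 8 + k0 / 2 > 0" "m > 0"
    using d_pos k0_pos mu_pos c_pos u_gt by (auto simp: m_def)
  fix x r :: real assume x: "0 \<le> x" "x \<le> 1/2" and r: "0 \<le> r" "r \<le> 1"
  have "(1 - r) * m \<le> (1 - r) * F x 0"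
    using F_bottom_ge[OF x] r by (intro mult_left_mono) (auto simp: m_def)
  moreover have "r * m \<le> r * (F x 1 + (d / 8 + k0 / 2) * (1 - 2 * x))"
    using F_top_ge_left[OF x] r by (intro mult_left_mono) (auto simp: m_def)
  ultimately show "m \<le> F x r + (d / 8 + k0 / 2) * r * (1 - 2 * x)"
    by (subst F_affine) (simp add: algebra_simps)
qed

end

section \<open>Trajectories\<close>

locale feedback_trajectory = feedback_game +
  fixes \<phi> :: "real \<Rightarrow> real \<times> real" and p0 :: "real \<times> real"
  assumes traj: "trajectory (field a b c d \<mu> u) p0 \<phi>" and start: "p0 \<in> Icube"
begin

definition X :: "real \<Rightarrow> real" where "X t = fst (\<phi> t)"
definition R :: "real \<Rightarrow> real" where "R t = snd (\<phi> t)"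

lemma X_deriv: "t \<ge> 0 \<Longrightarrow> (X has_real_derivative F (X t) (R t)) (at t within {0..})"
  using bounded_linear.has_vector_derivative[OF bounded_linear_fst, of \<phi>] traj
  by (auto simp: trajectory_def X_def[abs_def] R_def field_eq has_real_derivative_iff_has_vector_derivative)

lemma R_deriv: "t \<ge> 0 \<Longrightarrow> (R has_real_derivative R t * ((1 - R t) * (2 * X t - 1))) (at t within {0..})"
  using bounded_linear.has_vector_derivative[OF bounded_linear_snd, of \<phi>] traj
  by (auto simp: trajectory_def X_def R_def[abs_def] field_eq has_real_derivative_iff_has_vector_derivative
      mult.assoc)

lemma X_cont: "continuous_on {0..} X"
  using X_deriv by (rule continuous_on_of_deriv)

lemma R_cont: "continuous_on {0..} R"
  using R_deriv by (rule continuous_on_of_deriv)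

lemma start_bounds: "0 \<le> X 0" "X 0 \<le> 1" "0 \<le> R 0" "R 0 \<le> 1"
  using start traj by (auto simp: X_def R_def Icube_def trajectory_def)

lemma X_bounds:
  assumes "t \<ge> 0"
  shows "0 \<le> X t" "X t \<le> 1"
proof -
  show "0 \<le> X t"
    using barrier_ge[OF X_deriv, of 0 0 t] start_bounds assms mu_pos by (auto simp: F_0)
  have "-1 \<le> - X t"
    using barrier_ge[of "\<lambda>t. - X t" "\<lambda>t. - F (X t) (R t)" 0 "-1" t] DERIV_minus[OF X_deriv]
      start_bounds assms mu_pos
    by (auto simp: F_1)
  then show "X t \<le> 1" by simp
qed

lemma R_eq_exp:
  "t \<ge> 0 \<Longrightarrow> R t = R 0 * exp (integral {0..t} (\<lambda>s. (1 - R s) * (2 * X s - 1)))"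
  by (rule linear_ode_exp[OF R_deriv]) (auto intro!: continuous_intros X_cont R_cont)

lemma one_minus_R_eq_exp:
  "t \<ge> 0 \<Longrightarrow> 1 - R t = (1 - R 0) * exp (integral {0..t} (\<lambda>s. - R s * (2 * X s - 1)))"
proof (rule linear_ode_exp)
  show "((\<lambda>t. 1 - R t) has_real_derivative (1 - R t) * (- R t * (2 * X t - 1))) (at t within {0..})"
    if "t \<ge> 0" for t
    using R_deriv[OF that] by (auto intro!: derivative_eq_intros simp: algebra_simps)
qed (auto intro!: continuous_intros X_cont R_cont)

lemma R_bounds:
  assumes "t \<ge> 0"
  shows "0 \<le> R t" "R t \<le> 1"
proof -
  show "0 \<le> R t" using R_eq_exp[OF assms] start_bounds by simp
  have "0 \<le> 1 - R t" using one_minus_R_eq_exp[OF assms] start_bounds by simp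
  then show "R t \<le> 1" by simp
qed

lemma R_pos: "t \<ge> 0 \<Longrightarrow> 0 < R 0 \<Longrightarrow> 0 < R t"
  using R_eq_exp[of t] by simp

lemma R_lt_1: "t \<ge> 0 \<Longrightarrow> R 0 < 1 \<Longrightarrow> R t < 1"
proof -
  assume "t \<ge> 0" "R 0 < 1"
  then have "0 < 1 - R t" using one_minus_R_eq_exp[of t] by simp
  then show ?thesis by simp
qed

lemma R_mono:
  assumes "0 \<le> s" "s \<le> t" and right: "\<And>\<tau>. s \<le> \<tau> \<Longrightarrow> \<tau> \<le> t \<Longrightarrow> 1/2 \<le> X \<tau>"
  shows "R s \<le> R t"
proof -
  have "R s + 0 * (t - s) \<le> R t"
  proof (rule increment_ge_of_deriv_ge[OF R_deriv assms(1,2)])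
    fix \<tau> assume "s \<le> \<tau>" "\<tau> \<le> t"
    then have "1/2 \<le> X \<tau>" "0 \<le> R \<tau>" "R \<tau> \<le> 1" using right R_bounds assms by auto
    then show "0 \<le> R \<tau> * ((1 - R \<tau>) * (2 * X \<tau> - 1))" by simp
  qed
  then show ?thesis by simp
qed

lemma lyapunov_deriv:
  assumes "R 0 < 1" "t \<ge> 0"
  shows "((\<lambda>t. X t + \<beta> * ln (1 - R t)) has_real_derivative F (X t) (R t) + \<beta> * R t * (1 - 2 * X t))
    (at t within {0..})"
proof -
  have "R t < 1" using R_lt_1[OF assms(2,1)] .
  then show ?thesis
    using X_deriv[OF assms(2)] R_deriv[OF assms(2)]
    by (auto intro!: derivative_eq_intros simp: field_simps)
qed

lemma exists_X_gt_half:
  assumes "R 0 < 1"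
  shows "\<exists>T\<ge>0. 1/2 < X T"
proof (rule ccontr)
  assume "\<not> ?thesis"
  then have left: "\<And>t. t \<ge> 0 \<Longrightarrow> X t \<le> 1/2" by force
  obtain \<beta> m where "\<beta> > 0" "m > 0"
    and rate: "\<And>x r. 0 \<le> x \<Longrightarrow> x \<le> 1/2 \<Longrightarrow> 0 \<le> r \<Longrightarrow> r \<le> 1 \<Longrightarrow> m \<le> F x r + \<beta> * r * (1 - 2 * x)"
    using lyapunov_rate_left_half by blast
  define W where "W t = X t + \<beta> * ln (1 - R t)" for t
  have W_deriv: "(W has_real_derivative F (X t) (R t) + \<beta> * R t * (1 - 2 * X t)) (at t within {0..})"
    if "t \<ge> 0" for t
    unfolding W_def[abs_def] using assms that by (rule lyapunov_deriv)
  have W_le: "W t \<le> 1/2" if "t \<ge> 0" for t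
  proof -
    have "ln (1 - R t) \<le> 0" using R_bounds[OF that] R_lt_1[OF that assms] by simp
    then have "\<beta> * ln (1 - R t) \<le> 0" using \<open>\<beta> > 0\<close> by (simp add: mult_nonneg_nonpos)
    then show ?thesis using left[OF that] by (simp add: W_def)
  qed
  have W_bounded: "eventually (\<lambda>t. W t \<le> 1/2) at_top"
    using eventually_ge_at_top[of 0] by eventually_elim (rule W_le)
  have "eventually (\<lambda>t. 1/2 < W t) at_top"
  proof (rule eventually_gt_of_deriv_ge[OF W_deriv \<open>m > 0\<close> W_bounded])
    show "eventually (\<lambda>t. W t \<le> 1/2 \<longrightarrow> m \<le> F (X t) (R t) + \<beta> * R t * (1 - 2 * X t)) at_top"
      using eventually_ge_at_top[of 0]
    proof eventually_elim
      case (elim t)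
      then show ?case using rate[of "X t" "R t"] X_bounds[OF elim] left[OF elim] R_bounds[OF elim] by simp
    qed
  qed
  with W_bounded have "eventually (\<lambda>_. False) (at_top :: real filter)"
    by eventually_elim simp
  then show False by simp
qed

end

section \<open>Convergence to and stability of the equilibrium\<close>

locale feedback_equilibrium = feedback_game +
  fixes xt :: real
  assumes xt_gt: "1/2 < xt" and xt_lt: "xt < 1" and xt_root: "F xt 1 = 0"
begin

lemma F_top_pos: "1/2 \<le> x \<Longrightarrow> x < xt \<Longrightarrow> 0 < F x 1"
  using F_top_neg_after_nonpos[of x xt] xt_root xt_lt by force

lemma F_top_neg: "xt < x \<Longrightarrow> x \<le> 1 \<Longrightarrow> F x 1 < 0"
  using F_top_neg_after_nonpos[of xt x] xt_root xt_gt by force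

lemma F_top_cont: "continuous_on S (\<lambda>x. F x 1)"
  unfolding F_def by (intro continuous_intros)

end

locale equilibrium_trajectory = feedback_equilibrium + feedback_trajectory
begin

lemma X_stays_gt:
  assumes "1/2 \<le> x1" "x1 < xt" "0 \<le> T0" "x1 < X T0" "T0 \<le> t"
  shows "x1 < X t"
proof (rule barrier_gt[OF X_deriv assms(3,4) _ assms(5)])
  fix s assume "T0 \<le> s" "X s = x1"
  then have "F x1 1 \<le> F (X s) (R s)"
    using F_top_le[of x1 "R s"] R_bounds[of s] assms xt_lt by simp
  then show "0 < F (X s) (R s)" using F_top_pos[of x1] assms by simp
qed

lemma X_stays_lt:
  assumes "xt < x2" "x2 \<le> 1" "0 \<le> T0" "X T0 < x2" "T0 \<le> t"
    and near_top: "\<And>s. T0 \<le> s \<Longrightarrow> (1 - R s) * (a + b + c + d) < - F x2 1"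
  shows "X t < x2"
proof -
  have "- x2 < - X t"
  proof (rule barrier_gt[of "\<lambda>t. - X t" "\<lambda>t. - F (X t) (R t)", OF _ assms(3) _ _ assms(5)])
    show "((\<lambda>t. - X t) has_real_derivative - F (X t) (R t)) (at t within {0..})" if "t \<ge> 0" for t
      using X_deriv[OF that] by (rule DERIV_minus)
    fix s assume "T0 \<le> s" "- X s = - x2"
    then have "F (X s) (R s) \<le> F x2 1 + (1 - R s) * (a + b + c + d)"
      using F_le_top[of x2 "R s"] R_bounds[of s] assms xt_gt by simp
    then show "0 < - F (X s) (R s)" using near_top[OF \<open>T0 \<le> s\<close>] by simp
  qed (use assms in simp)
  then show ?thesis by simp
qed

lemma X_eventually_gt:
  assumes "0 \<le> T0" "1/2 < X T0" "l < xt"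
  shows "eventually (\<lambda>t. l < X t) at_top"
proof -
  obtain M where "M > 0" and M: "\<And>x. 1/2 \<le> x \<Longrightarrow> x \<le> l \<Longrightarrow> M \<le> F x 1"
    using continuous_on_interval_pos_bound[OF F_top_cont, of "1/2" l] F_top_pos assms(3) by force
  show ?thesis
  proof (rule eventually_gt_of_deriv_ge[OF X_deriv \<open>M > 0\<close>, of 1])
    show "eventually (\<lambda>t. X t \<le> 1) at_top"
      using eventually_ge_at_top[of 0] by eventually_elim (rule X_bounds)
    show "eventually (\<lambda>t. X t \<le> l \<longrightarrow> M \<le> F (X t) (R t)) at_top"
      using eventually_ge_at_top[of T0]
    proof eventually_elim
      case (elim t)
      have "1/2 < X t" using X_stays_gt[of "1/2" T0 t] elim assms xt_gt by simp
      then show ?case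
        using M[of "X t"] F_top_le[of "X t" "R t"] X_bounds[of t] R_bounds[of t] elim assms by force
    qed
  qed
qed

lemma R_tendsto_1:
  assumes "0 \<le> T0" "1/2 < X T0" "0 < R T0"
  shows "(R \<longlongrightarrow> 1) at_top"
proof -
  define l where "l = (1/2 + xt) / 2"
  have "1/2 < l" "l < xt" using xt_gt by (auto simp: l_def)
  obtain T1 where T1: "\<And>t. T1 \<le> t \<Longrightarrow> l < X t"
    using X_eventually_gt[OF assms(1,2) \<open>l < xt\<close>] unfolding eventually_at_top_linorder by blast
  define T where "T = max T0 T1"
  have R_ge: "R T0 \<le> R t" if "T0 \<le> t" for t
  proof (rule R_mono[OF assms(1) that])
    fix \<tau> assume "T0 \<le> \<tau>" "\<tau> \<le> t"
    then show "1/2 \<le> X \<tau>" using X_stays_gt[of "1/2" T0 \<tau>] assms xt_gt by simp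
  qed
  \<comment> \<open>beyond \<open>T\<close> the relative decay rate \<open>R (2 X - 1)\<close> of \<open>1 - R\<close> is at least \<open>\<kappa>\<close>\<close>
  define \<kappa> where "\<kappa> = R T0 * (2 * l - 1)"
  have "((\<lambda>t. 1 - R t) \<longlongrightarrow> 0) at_top"
  proof (rule tendsto_zero_of_deriv_le_neg_mult)
    show "((\<lambda>t. 1 - R t) has_real_derivative - (R t * ((1 - R t) * (2 * X t - 1)))) (at t within {0..})"
      if "t \<ge> 0" for t
      using R_deriv[OF that] by (auto intro!: derivative_eq_intros)
    show "\<kappa> > 0" "0 \<le> T" using assms \<open>1/2 < l\<close> by (auto simp: \<kappa>_def T_def)
    fix t assume "T \<le> t"
    then have "l < X t" "R T0 \<le> R t" "R t \<le> 1" "0 \<le> R t"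
      using T1 R_ge R_bounds assms by (auto simp: T_def)
    then show "0 \<le> 1 - R t" by simp
    have "\<kappa> \<le> R t * (2 * X t - 1)"
      unfolding \<kappa>_def using \<open>l < X t\<close> \<open>R T0 \<le> R t\<close> \<open>1/2 < l\<close> assms
      by (intro mult_mono) auto
    then have "\<kappa> * (1 - R t) \<le> R t * (2 * X t - 1) * (1 - R t)"
      using \<open>R t \<le> 1\<close> by (intro mult_right_mono) auto
    then show "- (R t * ((1 - R t) * (2 * X t - 1))) \<le> - \<kappa> * (1 - R t)"
      by (simp add: ac_simps)
  qed
  then show ?thesis
    using tendsto_diff[OF tendsto_const[of 1]] by fastforce
qed

lemma X_tendsto_xt:
  assumes "0 \<le> T0" "1/2 < X T0" "0 < R T0"
  shows "(X \<longlongrightarrow> xt) at_top"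
proof (rule tendsto_of_asymptotically_autonomous[OF X_deriv F_top_cont])
  show "eventually (\<lambda>t. 1/2 \<le> X t \<and> X t \<le> 1) at_top"
    using eventually_ge_at_top[of T0]
  proof eventually_elim
    case (elim t)
    then show ?case using X_stays_gt[of "1/2" T0 t] X_bounds[of t] assms xt_gt by simp
  qed
  have gap: "eventually (\<lambda>t. 0 \<le> F (X t) (R t) - F (X t) 1
      \<and> F (X t) (R t) - F (X t) 1 \<le> (1 - R t) * (a + b + c + d)) at_top"
    using eventually_ge_at_top[of 0]
  proof eventually_elim
    case (elim t)
    show ?case
      using F_top_le[OF X_bounds[OF elim] R_bounds(2)[OF elim]]
        F_le_top[OF X_bounds[OF elim] R_bounds[OF elim]] by simp
  qed
  have "((\<lambda>t. 1 - R t) \<longlongrightarrow> 0) at_top"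
    using tendsto_diff[OF tendsto_const[of 1] R_tendsto_1[OF assms]] by simp
  then have bound: "((\<lambda>t. (1 - R t) * (a + b + c + d)) \<longlongrightarrow> 0) at_top"
    by (rule tendsto_mult_left_zero)
  have lower: "eventually (\<lambda>t. 0 \<le> F (X t) (R t) - F (X t) 1) at_top"
    and upper: "eventually (\<lambda>t. F (X t) (R t) - F (X t) 1 \<le> (1 - R t) * (a + b + c + d)) at_top"
    using gap by (eventually_elim; simp)+
  show "((\<lambda>t. F (X t) (R t) - F (X t) 1) \<longlongrightarrow> 0) at_top"
    by (rule tendsto_sandwich[OF lower upper tendsto_const bound])
qed (use xt_gt xt_lt F_top_pos F_top_neg in auto)

lemma tendsto_equilibrium:
  assumes "0 \<le> T0" "1/2 < X T0" "0 < R T0"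
  shows "(\<phi> \<longlongrightarrow> (xt, 1)) at_top"
  using tendsto_Pair[OF X_tendsto_xt[OF assms] R_tendsto_1[OF assms]] by (simp add: X_def R_def)

lemma stays_near_equilibrium:
  assumes x1: "1/2 < x1" "x1 < xt" "x1 < X 0" and x2: "xt < x2" "x2 \<le> 1" "X 0 < x2"
    and \<rho>: "0 < \<rho>" "\<rho> \<le> R 0" "(1 - \<rho>) * (a + b + c + d) < - F x2 1" and "0 \<le> t"
  shows "x1 < X t \<and> X t < x2 \<and> \<rho> \<le> R t"
proof -
  have X_gt: "x1 < X s" if "0 \<le> s" for s
    using X_stays_gt[of x1 0 s] x1 that by simp
  have R_ge: "\<rho> \<le> R s" if "0 \<le> s" for s
  proof -
    have "R 0 \<le> R s"
    proof (rule R_mono[OF order.refl that])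
      fix \<tau> assume "0 \<le> \<tau>" "\<tau> \<le> s"
      then show "1/2 \<le> X \<tau>" using X_gt[of \<tau>] x1 by linarith
    qed
    then show ?thesis using \<rho> by linarith
  qed
  have "(1 - R s) * (a + b + c + d) < - F x2 1" if "0 \<le> s" for s
  proof -
    have "(1 - R s) * (a + b + c + d) \<le> (1 - \<rho>) * (a + b + c + d)"
      using R_ge[OF that] a_pos b_pos c_pos d_pos by (intro mult_right_mono) auto
    then show ?thesis using \<rho>(3) by linarith
  qed
  then have "X t < x2" using X_stays_lt[of x2 0 t] x2 \<open>0 \<le> t\<close> by simp
  then show ?thesis using X_gt R_ge \<open>0 \<le> t\<close> by simp
qed


lemma dist_lt_of_near_start:
  assumes "0 < \<alpha>" "1/2 < xt - \<alpha>" "xt + \<alpha> \<le> 1" and "0 < \<eta>" "\<eta> < 1"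
    and \<eta>K: "\<eta> * (a + b + c + d) < - F (xt + \<alpha>) 1"
    and near: "dist p0 (xt, 1) < min \<alpha> \<eta>" and "0 \<le> t"
  shows "dist (\<phi> t) (xt, 1) < \<alpha> + \<eta>"
proof -
  have "\<phi> 0 = p0" using traj by (simp add: trajectory_def)
  then have "dist (X 0) xt < \<alpha>" "dist (R 0) 1 < \<eta>"
    using dist_fst_le[of p0 "(xt, 1)"] dist_snd_le[of p0 "(xt, 1)"] near by (auto simp: X_def R_def)
  then have "xt - \<alpha> < X t \<and> X t < xt + \<alpha> \<and> 1 - \<eta> \<le> R t"
    using stays_near_equilibrium[of "xt - \<alpha>" "xt + \<alpha>" "1 - \<eta>" t] assms by (auto simp: dist_real_def)
  then have "\<bar>X t - xt\<bar> < \<alpha>" "\<bar>R t - 1\<bar> \<le> \<eta>"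
    using R_bounds[OF \<open>0 \<le> t\<close>] by (auto simp: abs_less_iff abs_le_iff)
  moreover have "dist (\<phi> t) (xt, 1) \<le> \<bar>X t - xt\<bar> + \<bar>R t - 1\<bar>"
    using sqrt_sum_squares_le_sum_abs[of "X t - xt" "R t - 1"]
    by (simp add: X_def R_def dist_Pair_Pair[of "fst (\<phi> t)" "snd (\<phi> t)", simplified] dist_real_def)
  ultimately show ?thesis by linarith
qed
end

context feedback_equilibrium
begin

lemma equilibrium_trajectoryI:
  "trajectory (field a b c d \<mu> u) p0 \<phi> \<Longrightarrow> p0 \<in> Icube \<Longrightarrow> equilibrium_trajectory a b c d \<mu> u xt \<phi> p0"
  by unfold_locales auto

lemma lyap_stable_equilibrium: "lyap_stable (field a b c d \<mu> u) Icube (xt, 1)"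
  unfolding lyap_stable_def
proof (intro allI impI)
  fix \<epsilon> :: real assume "\<epsilon> > 0"
  define \<alpha> where "\<alpha> = min (\<epsilon> / 2) (min ((xt - 1/2) / 2) ((1 - xt) / 2))"
  have "\<alpha> \<le> (xt - 1/2) / 2" "\<alpha> \<le> (1 - xt) / 2" unfolding \<alpha>_def by linarith+
  then have \<alpha>: "0 < \<alpha>" "\<alpha> \<le> \<epsilon> / 2" "1/2 < xt - \<alpha>" "xt + \<alpha> < 1"
    using \<open>\<epsilon> > 0\<close> xt_gt xt_lt by (auto simp: \<alpha>_def)
  define K where "K = a + b + c + d"
  have "K > 0" using a_pos b_pos c_pos d_pos by (simp add: K_def)
  have "0 < - F (xt + \<alpha>) 1" using F_top_neg[of "xt + \<alpha>"] \<alpha> by simp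
  define \<eta> where "\<eta> = min (min (\<epsilon> / 2) (1/2)) (- F (xt + \<alpha>) 1 / (2 * K))"
  have \<eta>: "0 < \<eta>" "\<eta> \<le> \<epsilon> / 2" "\<eta> < 1"
    using \<open>\<epsilon> > 0\<close> \<open>K > 0\<close> \<open>0 < - F (xt + \<alpha>) 1\<close> by (auto simp: \<eta>_def divide_neg_pos)
  have "\<eta> * K \<le> - F (xt + \<alpha>) 1 / 2"
    using \<open>K > 0\<close> mult_right_mono[of \<eta> "- F (xt + \<alpha>) 1 / (2 * K)" K] by (simp add: \<eta>_def)
  then have \<eta>K: "\<eta> * (a + b + c + d) < - F (xt + \<alpha>) 1"
    using \<open>0 < - F (xt + \<alpha>) 1\<close> by (simp add: K_def)
  show "\<exists>\<delta>>0. \<forall>p0 \<phi>. p0 \<in> Icube \<and> dist p0 (xt, 1) < \<delta> \<and> trajectory (field a b c d \<mu> u) p0 \<phi> \<longrightarrow>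
      (\<forall>t\<ge>0. dist (\<phi> t) (xt, 1) < \<epsilon>)"
  proof (intro exI[of _ "min \<alpha> \<eta>"] conjI allI impI)
    show "0 < min \<alpha> \<eta>" using \<alpha> \<eta> by simp
    fix p0 \<phi> and t :: real
    assume "p0 \<in> Icube \<and> dist p0 (xt, 1) < min \<alpha> \<eta> \<and> trajectory (field a b c d \<mu> u) p0 \<phi>"
      and "0 \<le> t"
    then have "dist (\<phi> t) (xt, 1) < \<alpha> + \<eta>"
      using equilibrium_trajectory.dist_lt_of_near_start[OF equilibrium_trajectoryI] \<alpha> \<eta> \<eta>K
      by (meson less_imp_le)
    then show "dist (\<phi> t) (xt, 1) < \<epsilon>" using \<alpha> \<eta> by linarith
  qed
qed

lemma attracts_nearby:
  "\<exists>\<delta>>0. \<forall>p0 \<phi>. p0 \<in> Icube \<and> dist p0 (xt, 1) < \<delta> \<and> trajectory (field a b c d \<mu> u) p0 \<phi> \<longrightarrow>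
      (\<phi> \<longlongrightarrow> (xt, 1)) at_top"
proof (intro exI[of _ "min (xt - 1/2) 1"] conjI allI impI)
  show "0 < min (xt - 1/2) 1" using xt_gt by simp
  fix p0 \<phi>
  assume H: "p0 \<in> Icube \<and> dist p0 (xt, 1) < min (xt - 1/2) 1 \<and> trajectory (field a b c d \<mu> u) p0 \<phi>"
  interpret equilibrium_trajectory a b c d \<mu> u xt \<phi> p0
    using equilibrium_trajectoryI H by blast
  have "\<phi> 0 = p0" using traj by (simp add: trajectory_def)
  then have "dist (X 0) xt < xt - 1/2" "dist (R 0) 1 < 1"
    using dist_fst_le[of p0 "(xt, 1)"] dist_snd_le[of p0 "(xt, 1)"] H by (auto simp: X_def R_def)
  then have "1/2 < X 0" "0 < R 0" by (auto simp: dist_real_def)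
  then show "(\<phi> \<longlongrightarrow> (xt, 1)) at_top" by (intro tendsto_equilibrium[of 0]) auto
qed

lemma attracts_interior:
  assumes "p0 \<in> Icube - (Btop \<union> Bbot)" and "trajectory (field a b c d \<mu> u) p0 \<phi>"
  shows "(\<phi> \<longlongrightarrow> (xt, 1)) at_top"
proof -
  interpret equilibrium_trajectory a b c d \<mu> u xt \<phi> p0
    using equilibrium_trajectoryI assms by blast
  have "\<phi> 0 = p0" using traj by (simp add: trajectory_def)
  then have "0 < R 0" "R 0 < 1"
    using assms(1) by (auto simp: R_def Icube_def Btop_def Bbot_def less_le)
  obtain T0 where "0 \<le> T0" "1/2 < X T0" using exists_X_gt_half[OF \<open>R 0 < 1\<close>] by blast
  moreover have "0 < R T0" using R_pos[OF \<open>0 \<le> T0\<close> \<open>0 < R 0\<close>] .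
  ultimately show ?thesis by (rule tendsto_equilibrium)
qed

lemma almost_globally_stable_equilibrium: "almost_globally_stable (field a b c d \<mu> u) (xt, 1)"
proof -
  have "field a b c d \<mu> u (xt, 1) = 0" using xt_root by (simp add: field_eq zero_prod_def)
  then show ?thesis
    unfolding almost_globally_stable_def asympt_stable_def
    using lyap_stable_equilibrium attracts_nearby attracts_interior by blast
qed

end

theorem theorem21:
  fixes a b c d \<mu> u xt :: real
  assumes "a > 0" "b > 0" "c > 0" "d > 0" "a + c \<le> b + d"
    and "0 < \<mu>" "\<mu> \<le> 1" "u > (c + d) / 2"
    and "1/2 < xt" "xt < 1" "field a b c d \<mu> u (xt, 1) = 0"
  shows "almost_globally_stable (field a b c d \<mu> u) (xt, 1)"
proof -
  interpret feedback_game a b c d \<mu> u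
    using assms by unfold_locales auto
  interpret feedback_equilibrium a b c d \<mu> u xt
    using assms by unfold_locales (simp_all add: field_eq zero_prod_def)
  show ?thesis by (rule almost_globally_stable_equilibrium)
qed

end
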